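(* Let $r\ge 2$ be a constant, and let $k\ge 2r$ and $n\ge k$. Let $T(k)$ be the optimization time of the (1+1) EA with bit flip probability $1/n$ on $\mathrm{Fork}_{k,r}$ (bit strings of length $k$), where $\mathrm{Fork}_{k,r}(x)=k+1$ if $x=0^r1^{k-r}$, $k+2$ if $x=1^{k-r}0^r$, and $|x|_1$ otherwise. Then $E(T(k))\in\Theta(n^{2r})$.
   Context: The (1+1) EA with bit flip probability $1/n$ on strings of length $k$: start with $x$ uniform in $\{0,1\}^k$; each iteration create $y$ by flipping each bit of $x$ independently with probability $1/n$, set $x\gets y$ if $f(y)\ge f(x)$. Optimization time = number of iterations until the optimum $1^{k-r}0^r$ is the current solution. Asymptotics are with respect to $n\to\infty$. *)

theory Defs
  imports "HOL-Probability.Probability"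
begin

text \<open>Bit strings of length k are modelled as boolean lists (True = 1).\<close>

definition fork :: "nat \<Rightarrow> nat \<Rightarrow> bool list \<Rightarrow> nat" where
  "fork k r x =
     (if x = replicate r False @ replicate (k - r) True then k + 1
      else if x = replicate (k - r) True @ replicate r False then k + 2
      else length (filter id x))"

definition fork_opt :: "nat \<Rightarrow> nat \<Rightarrow> bool list" where
  "fork_opt k r = replicate (k - r) True @ replicate r False"

primrec mutate :: "real \<Rightarrow> bool list \<Rightarrow> bool list pmf" where
  "mutate p [] = return_pmf []"
| "mutate p (b # bs) =
     bernoulli_pmf p \<bind> (\<lambda>c. mutate p bs \<bind> (\<lambda>ys. return_pmf ((if c then \<not> b else b) # ys)))"

definition ea_step :: "(bool list \<Rightarrow> nat) \<Rightarrow> nat \<Rightarrow> bool list \<Rightarrow> bool list pmf" where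
  "ea_step f n x = map_pmf (\<lambda>y. if f y \<ge> f x then y else x) (mutate (1 / real n) x)"

definition ea_init :: "nat \<Rightarrow> bool list pmf" where
  "ea_init k = pmf_of_set {xs. length xs = k}"

text \<open>Process stopped at the first time the optimum is the current solution:
  the value None means that the optimum has already been the current solution at
  some time \<le> t; Some x means that it has not, and x is the current solution.\<close>
definition ea_stopped_step ::
  "(bool list \<Rightarrow> nat) \<Rightarrow> nat \<Rightarrow> bool list \<Rightarrow> bool list option \<Rightarrow> bool list option pmf" where
  "ea_stopped_step f n opt s =
     (case s of None \<Rightarrow> return_pmf None
      | Some x \<Rightarrow> map_pmf (\<lambda>y. if y = opt then None else Some y) (ea_step f n x))"

definition ea_stopped :: "(bool list \<Rightarrow> nat) \<Rightarrow> nat \<Rightarrow> nat \<Rightarrow> bool list \<Rightarrow> nat \<Rightarrow> bool list option pmf" where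
  "ea_stopped f n k opt t =
     ((\<lambda>D. D \<bind> ea_stopped_step f n opt) ^^ t)
       (map_pmf (\<lambda>x. if x = opt then None else Some x) (ea_init k))"

text \<open>Expected optimization time E(T) = sum over t \<ge> 0 of Pr[T > t]
  (an extended non-negative real; may be infinite in general).\<close>
definition expected_opt_time :: "(bool list \<Rightarrow> nat) \<Rightarrow> nat \<Rightarrow> nat \<Rightarrow> bool list \<Rightarrow> ennreal" where
  "expected_opt_time f n k opt =
     (\<Sum>t. ennreal (measure_pmf.prob (ea_stopped f n k opt t) (range Some)))"

end

theory Submission
  imports Defs
begin

text \<open>Upper bound: every non-optimal point has a strictly fitter point at Hamming distance 1
  (below the all-ones string), r (from the all-ones string to the optimum) or 2r (from the trap
  0^r 1^(k-r) to the optimum). Mutation produces a given point at distance d with probability at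
  least n^-d (1 - 1/n)^n >= n^-d e^-2, so the fitness-level potential drops by at least 1 per step
  in expectation, and it starts below (k n + n^r + n^2r) e^2.

  Lower bound: string reversal swaps the trap and the optimum and commutes with the EA at every
  other point. Hence, until one of the two is hit, the process is reversal symmetric, and in
  expectation it steps into the trap exactly as often as into the optimum. The potential that is
  1/p at the trap and 1/(2p) at all other non-optimal points, where p <= n^-2r is the probability
  of the jump from the trap to the optimum, therefore loses in expectation exactly the probability
  of currently sitting in the trap, which is at most Pr[T > t]. Summing over t gives
  E(T) >= Pr[T > 0] / (2p) >= 1/(4p).\<close>

section \<open>Hamming distance and standard bit mutation\<close>

definition hamming :: "bool list \<Rightarrow> bool list \<Rightarrow> nat" where
  "hamming xs ys = length (filter (\<lambda>(a, b). a \<noteq> b) (zip xs ys))"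

lemma hamming_Cons [simp]:
  "hamming (x # xs) (y # ys) = (if x = y then 0 else 1) + hamming xs ys"
  by (simp add: hamming_def)

lemma hamming_self [simp]: "hamming xs xs = 0"
  by (induction xs) (auto simp: hamming_def)

lemma hamming_le_length: "hamming xs ys \<le> length xs"
  unfolding hamming_def by (metis length_filter_le length_zip min.bounded_iff)

lemma hamming_rev: "length xs = length ys \<Longrightarrow> hamming (rev xs) (rev ys) = hamming xs ys"
  by (simp add: hamming_def zip_rev rev_filter[symmetric])

lemma hamming_append:
  "length xs = length ys \<Longrightarrow> hamming (xs @ xs') (ys @ ys') = hamming xs ys + hamming xs' ys'"
  by (simp add: hamming_def)

lemma hamming_replicate: "hamming (replicate m a) (replicate m b) = (if a = b then 0 else m)"
  by (induction m) (auto simp: hamming_def)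

lemma mutate_Cons_eq_map_pair:
  "mutate p (b # bs) = map_pmf (\<lambda>(c, ys). (c \<noteq> b) # ys) (pair_pmf (bernoulli_pmf p) (mutate p bs))"
  by (simp add: pair_pmf_def map_bind_pmf bind_return_pmf map_return_pmf)
     (intro bind_pmf_cong refl; auto)

lemma length_of_set_pmf_mutate: "ys \<in> set_pmf (mutate p xs) \<Longrightarrow> length ys = length xs"
  by (induction xs arbitrary: ys) auto

lemma pmf_mutate:
  assumes "0 \<le> p" "p \<le> 1"
  shows "pmf (mutate p xs) ys =
    (if length ys = length xs
     then p ^ hamming xs ys * (1 - p) ^ (length xs - hamming xs ys) else 0)"
proof (induction xs arbitrary: ys)
  case Nil
  then show ?case by (auto simp: indicator_def hamming_def)
next
  case (Cons b bs)
  show ?case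
  proof (cases ys)
    case Nil
    then show ?thesis
      unfolding mutate_Cons_eq_map_pair by (auto intro: pmf_map_outside)
  next
    case (Cons y ys')
    have inj: "inj (\<lambda>(c, ys). (c \<noteq> b) # (ys :: bool list))"
      by (auto simp: inj_def)
    have "ys = (\<lambda>(c, ys). (c \<noteq> b) # ys) (y \<noteq> b, ys')"
      using Cons by auto
    then have "pmf (mutate p (b # bs)) ys = pmf (bernoulli_pmf p) (y \<noteq> b) * pmf (mutate p bs) ys'"
      unfolding mutate_Cons_eq_map_pair by (simp only: pmf_map_inj'[OF inj] pmf_pair)
    then show ?thesis
      using Cons.IH[of ys'] assms hamming_le_length[of bs ys'] by (auto simp: Cons Suc_diff_le)
  qed
qed

lemma mutate_rev:
  assumes "0 \<le> p" "p \<le> 1"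
  shows "mutate p (rev xs) = map_pmf rev (mutate p xs)"
proof (rule pmf_eqI)
  fix ys :: "bool list"
  have "pmf (map_pmf rev (mutate p xs)) ys = pmf (mutate p xs) (rev ys)"
    using pmf_map_inj'[of rev "mutate p xs" "rev ys"] by (simp add: inj_def)
  then show "pmf (mutate p (rev xs)) ys = pmf (map_pmf rev (mutate p xs)) ys"
    using hamming_rev[of "rev xs" ys] by (simp add: pmf_mutate[OF assms])
qed

lemma one_over_real_nat_le_1: "1 / real n \<le> 1"
  by (cases "n = 0") (auto simp: divide_le_eq)

lemma pmf_mutate_ge:
  assumes "length ys = length xs" "length xs \<le> n"
  shows "(1 / real n) ^ hamming xs ys * (1 - 1 / real n) ^ n \<le> pmf (mutate (1 / real n) xs) ys"
proof -
  have p: "0 \<le> 1 / real n" "1 / real n \<le> 1"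
    by (simp_all add: one_over_real_nat_le_1)
  have "(1 - 1 / real n) ^ n \<le> (1 - 1 / real n) ^ (length xs - hamming xs ys)"
    using assms p by (intro power_decreasing) auto
  then show ?thesis
    using assms by (simp add: pmf_mutate[OF p] mult_left_mono)
qed

section \<open>Drift and symmetry for chains of pmfs\<close>
lemma telescope_le:
  fixes u e :: "nat \<Rightarrow> 'a :: ordered_comm_monoid_add"
  assumes "\<And>t. u (Suc t) + e t \<le> u t"
  shows "(\<Sum>t<m. e t) + u m \<le> u 0"
proof (induction m)
  case (Suc m)
  have "(\<Sum>t<Suc m. e t) + u (Suc m) = (\<Sum>t<m. e t) + (u (Suc m) + e m)"
    by (simp add: ac_simps)
  also have "\<dots> \<le> (\<Sum>t<m. e t) + u m"
    by (intro add_left_mono assms)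
  also have "\<dots> \<le> u 0"
    by (rule Suc.IH)
  finally show ?case .
qed simp

lemma nn_integral_chain_drift:
  fixes D :: "nat \<Rightarrow> 'a pmf" and K :: "'a \<Rightarrow> 'a pmf"
  assumes D_Suc: "\<And>t. D (Suc t) = D t \<bind> K"
    and drift: "\<And>t s. s \<in> set_pmf (D t) \<Longrightarrow> (\<integral>\<^sup>+ s'. g s' \<partial>K s) + e s \<le> g s"
  shows "(\<Sum>t<m. \<integral>\<^sup>+ s. e s \<partial>D t) + (\<integral>\<^sup>+ s. g s \<partial>D m) \<le> (\<integral>\<^sup>+ s. g s \<partial>D 0)"
proof (rule telescope_le)
  fix t
  have "(\<integral>\<^sup>+ s. g s \<partial>D (Suc t)) + (\<integral>\<^sup>+ s. e s \<partial>D t)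
      = (\<integral>\<^sup>+ s. (\<integral>\<^sup>+ s'. g s' \<partial>K s) + e s \<partial>D t)"
    by (simp add: D_Suc nn_integral_bind_pmf nn_integral_add)
  also have "\<dots> \<le> (\<integral>\<^sup>+ s. g s \<partial>D t)"
    by (intro nn_integral_mono_AE) (simp add: AE_measure_pmf_iff drift)
  finally show "(\<integral>\<^sup>+ s. g s \<partial>D (Suc t)) + (\<integral>\<^sup>+ s. e s \<partial>D t) \<le> (\<integral>\<^sup>+ s. g s \<partial>D t)" .
qed

lemma telescope_ge:
  fixes u e :: "nat \<Rightarrow> 'a :: ordered_comm_monoid_add"
  assumes "\<And>t. u t \<le> u (Suc t) + e t"
  shows "u 0 \<le> (\<Sum>t<m. e t) + u m"
proof (induction m)
  case (Suc m)
  have "u 0 \<le> (\<Sum>t<m. e t) + u m"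
    by (rule Suc.IH)
  also have "\<dots> \<le> (\<Sum>t<m. e t) + (u (Suc m) + e m)"
    by (intro add_left_mono assms)
  also have "\<dots> = (\<Sum>t<Suc m. e t) + u (Suc m)"
    by (simp add: ac_simps)
  finally show ?case .
qed simp

lemma ennreal_le_suminf_if_tail_bound:
  fixes P :: "nat \<Rightarrow> real"
  assumes nonneg: "\<And>t. 0 \<le> P t"
    and bound: "\<And>m. c \<le> (\<Sum>t<m. P t) + H * P m"
  shows "ennreal c \<le> (\<Sum>t. ennreal (P t))"
proof (cases "summable P")
  case True
  have "(\<lambda>m. (\<Sum>t<m. P t) + H * P m) \<longlonglongrightarrow> suminf P + H * 0"
    using True
    by (intro tendsto_add tendsto_mult tendsto_const summable_LIMSEQ summable_LIMSEQ_zero)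
  then have "c \<le> suminf P"
    using bound by (simp add: LIMSEQ_le_const)
  then show ?thesis
    using True nonneg by (simp add: suminf_ennreal2 ennreal_leI)
next
  case False
  then have "(\<Sum>t. ennreal (P t)) = \<top>"
    using nonneg summable_suminf_not_top by blast
  then show ?thesis
    by simp
qed

lemma map_pmf_bind_pmf_lumped:
  assumes "\<And>s. s \<in> set_pmf M \<Longrightarrow> map_pmf h (K s) = K' (h s)"
  shows "map_pmf h (M \<bind> K) = map_pmf h M \<bind> K'"
  using assms by (simp add: map_bind_pmf bind_map_pmf cong: bind_pmf_cong)

lemma map_pmf_chain_invariant:
  fixes D :: "nat \<Rightarrow> 'a pmf"
  assumes D_Suc: "\<And>t. D (Suc t) = D t \<bind> K"
    and init: "map_pmf h (D 0) = D 0"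
    and commute: "\<And>t s. s \<in> set_pmf (D t) \<Longrightarrow> map_pmf h (K s) = K (h s)"
  shows "map_pmf h (D t) = D t"
proof (induction t)
  case (Suc t)
  have "map_pmf h (D (Suc t)) = map_pmf h (D t) \<bind> K"
    unfolding D_Suc by (rule map_pmf_bind_pmf_lumped) (rule commute)
  then show ?case
    using Suc.IH D_Suc by simp
qed (rule init)

section \<open>The stopped (1+1) EA and fitness levels\<close>

lemma length_of_set_pmf_ea_step: "y \<in> set_pmf (ea_step f n x) \<Longrightarrow> length y = length x"
  unfolding ea_step_def by (auto dest: length_of_set_pmf_mutate)

lemma finite_lists_length: "finite {xs :: bool list. length xs = k}"
  using finite_lists_length_eq[of "UNIV :: bool set" k] by simp

lemma card_lists_length: "card {xs :: bool list. length xs = k} = 2 ^ k"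
  using card_lists_length_eq[of "UNIV :: bool set" k] by simp

lemma set_pmf_ea_init: "set_pmf (ea_init k) = {xs. length xs = k}"
  unfolding ea_init_def
  by (simp add: set_pmf_of_set finite_lists_length Ex_list_of_length)

lemma ea_stopped_Suc:
  "ea_stopped f n k opt (Suc t) = ea_stopped f n k opt t \<bind> ea_stopped_step f n opt"
  by (simp add: ea_stopped_def)

lemma set_pmf_ea_stopped:
  "Some x \<in> set_pmf (ea_stopped f n k opt t) \<Longrightarrow> length x = k \<and> x \<noteq> opt"
proof (induction t arbitrary: x)
  case 0
  then show ?case by (auto simp: ea_stopped_def set_pmf_ea_init split: if_splits)
next
  case (Suc t)
  then obtain s where s: "s \<in> set_pmf (ea_stopped f n k opt t)"
    "Some x \<in> set_pmf (ea_stopped_step f n opt s)"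
    by (auto simp: ea_stopped_Suc)
  then obtain y where "s = Some y" "length y = k"
    using Suc.IH by (cases s) (auto simp: ea_stopped_step_def)
  then show ?case
    using s(2) by (auto simp: ea_stopped_step_def split: if_splits dest: length_of_set_pmf_ea_step)
qed

lemma measure_ea_stopped_0:
  assumes "length opt = k"
  shows "measure (ea_stopped f n k opt 0) (range Some) = 1 - 1 / 2 ^ k"
proof -
  have "(\<lambda>x. if x = opt then None else Some x) -` range Some = - {opt}"
    by auto
  then have "measure (ea_stopped f n k opt 0) (range Some) = 1 - measure (ea_init k) {opt}"
    using measure_pmf.prob_compl[of "{opt}" "ea_init k"]
    by (simp add: ea_stopped_def Compl_eq_Diff_UNIV)
  also have "measure (ea_init k) {opt} = 1 / 2 ^ k"
    using assms unfolding ea_init_def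
    by (simp add: measure_pmf_single pmf_of_set finite_lists_length card_lists_length
        Ex_list_of_length)
  finally show ?thesis .
qed

lemma expected_opt_time_eq_suminf:
  "expected_opt_time f n k opt = (\<Sum>t. emeasure (ea_stopped f n k opt t) (range Some))"
  by (simp add: expected_opt_time_def measure_pmf.emeasure_eq_measure)

definition level_potential :: "(nat \<Rightarrow> real) \<Rightarrow> nat \<Rightarrow> nat \<Rightarrow> real" where
  "level_potential w L v = (\<Sum>u\<in>{v..<L}. w u)"

lemma level_potential_nonneg: "(\<And>u. 0 \<le> w u) \<Longrightarrow> 0 \<le> level_potential w L v"
  unfolding level_potential_def by (intro sum_nonneg) auto

lemma level_potential_le_sum: "(\<And>u. 0 \<le> w u) \<Longrightarrow> level_potential w L v \<le> (\<Sum>u<L. w u)"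
  unfolding level_potential_def by (intro sum_mono2) auto

lemma level_potential_antimono:
  "(\<And>u. 0 \<le> w u) \<Longrightarrow> v \<le> v' \<Longrightarrow> level_potential w L v' \<le> level_potential w L v"
  unfolding level_potential_def by (intro sum_mono2) auto

lemma level_potential_Suc:
  "v < L \<Longrightarrow> level_potential w L v = w v + level_potential w L (Suc v)"
  unfolding level_potential_def by (simp add: sum.atLeast_Suc_lessThan)

lemma ea_step_level_drift:
  assumes w: "\<And>u. 0 \<le> w u"
    and x: "f x < L" and y: "f x < f y" "1 \<le> w (f x) * pmf (mutate (1 / real n) x) y"
  shows "(\<integral>\<^sup>+ z. level_potential w L (f z) \<partial>ea_step f n x) + 1 \<le> level_potential w L (f x)"
proof -
  let ?g = "\<lambda>z. level_potential w L (f z)"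
  let ?M = "mutate (1 / real n) x"
  define acc where "acc z = (if f x \<le> f z then z else x)" for z
  have pointwise: "ennreal (?g (acc z)) + ennreal (w (f x)) * indicator {y} z \<le> ennreal (?g x)"
    for z
  proof (cases "z = y")
    case True
    have "?g y \<le> level_potential w L (Suc (f x))"
      using y(1) by (intro level_potential_antimono w) simp
    then have "?g y + w (f x) \<le> ?g x"
      using level_potential_Suc[OF x] by simp
    then show ?thesis
      using True y(1) w level_potential_nonneg[OF w]
      by (simp add: acc_def ennreal_plus[symmetric] del: ennreal_plus)
  next
    case False
    have "?g (acc z) \<le> ?g x"
      by (intro level_potential_antimono w) (simp add: acc_def)
    then show ?thesis
      using False by (simp add: ennreal_leI)
  qed
  have "(\<integral>\<^sup>+ z. ennreal (?g z) \<partial>ea_step f n x) + 1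
      \<le> (\<integral>\<^sup>+ z. ennreal (?g (acc z)) \<partial>?M) + ennreal (w (f x)) * ennreal (pmf ?M y)"
    using y(2) w
    by (simp add: ea_step_def acc_def ennreal_mult[symmetric] ennreal_leI del: ennreal_mult)
  also have "\<dots> = (\<integral>\<^sup>+ z. ennreal (?g (acc z)) + ennreal (w (f x)) * indicator {y} z \<partial>?M)"
    by (simp add: nn_integral_add nn_integral_cmult_indicator emeasure_pmf_single)
  also have "\<dots> \<le> (\<integral>\<^sup>+ z. ennreal (?g x) \<partial>?M)"
    by (intro nn_integral_mono pointwise)
  also have "\<dots> = ennreal (?g x)"
    by (simp add: measure_pmf.emeasure_space_1)
  finally show ?thesis .
qed

lemma expected_opt_time_fitness_levels:
  assumes w: "\<And>u. 0 \<le> w u"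
    and below_L: "\<And>x. length x = k \<Longrightarrow> x \<noteq> opt \<Longrightarrow> f x < L"
    and improve: "\<And>x. length x = k \<Longrightarrow> x \<noteq> opt \<Longrightarrow>
      \<exists>y. f x < f y \<and> 1 \<le> w (f x) * pmf (mutate (1 / real n) x) y"
  shows "expected_opt_time f n k opt \<le> ennreal (\<Sum>v<L. w v)"
proof -
  let ?D = "ea_stopped f n k opt"
  let ?S = "ea_stopped_step f n opt"
  define G where "G s = (case s of None \<Rightarrow> 0 | Some x \<Rightarrow> ennreal (level_potential w L (f x)))"
    for s
  have G_le: "G s \<le> ennreal (\<Sum>v<L. w v)" for s
    using level_potential_le_sum[OF w] by (cases s) (auto simp: G_def ennreal_leI)
  have drift: "(\<integral>\<^sup>+ s'. G s' \<partial>?S s) + indicator (range Some) s \<le> G s"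
    if "s \<in> set_pmf (?D t)" for s t
  proof (cases s)
    case None
    then show ?thesis by (simp add: ea_stopped_step_def G_def)
  next
    case (Some x)
    then have x: "length x = k" "x \<noteq> opt"
      using that set_pmf_ea_stopped by blast+
    obtain y where y: "f x < f y" "1 \<le> w (f x) * pmf (mutate (1 / real n) x) y"
      using improve[OF x] by blast
    have "(\<integral>\<^sup>+ s'. G s' \<partial>?S s) \<le> (\<integral>\<^sup>+ z. level_potential w L (f z) \<partial>ea_step f n x)"
      using Some by (auto simp: ea_stopped_step_def G_def intro!: nn_integral_mono)
    moreover have "(\<integral>\<^sup>+ z. level_potential w L (f z) \<partial>ea_step f n x) + 1 \<le> level_potential w L (f x)"
      using w below_L[OF x] y by (rule ea_step_level_drift)
    ultimately show ?thesis
      using Some by (simp add: G_def) (metis add_right_mono order_trans)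
  qed
  have "(\<Sum>t<m. emeasure (?D t) (range Some)) \<le> ennreal (\<Sum>v<L. w v)" for m
  proof -
    have "(\<Sum>t<m. emeasure (?D t) (range Some))
        \<le> (\<Sum>t<m. \<integral>\<^sup>+ s. indicator (range Some) s \<partial>?D t) + (\<integral>\<^sup>+ s. G s \<partial>?D m)"
      by (rule add_increasing2) simp_all
    also have "\<dots> \<le> (\<integral>\<^sup>+ s. G s \<partial>?D 0)"
      using ea_stopped_Suc drift by (rule nn_integral_chain_drift)
    also have "\<dots> \<le> ennreal (\<Sum>v<L. w v)"
      using nn_integral_mono[OF G_le, of "?D 0"] by (simp add: measure_pmf.emeasure_space_1)
    finally show ?thesis .
  qed
  then show ?thesis
    unfolding expected_opt_time_eq_suminf
    by (rule ennreal_suminf_bound_add[where y = 0, unfolded add_0_right])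
qed

section \<open>The Fork landscape\<close>

definition fork_trap :: "nat \<Rightarrow> nat \<Rightarrow> bool list" where
  "fork_trap k r = replicate r False @ replicate (k - r) True"

definition fork_level_gap :: "nat \<Rightarrow> nat \<Rightarrow> nat \<Rightarrow> nat" where
  "fork_level_gap k r v = (if v < k then 1 else if v = k then r else 2 * r)"

locale fork_landscape =
  fixes k r :: nat
  assumes r_pos: "1 \<le> r" and two_r_le_k: "2 * r \<le> k"
begin

abbreviation trap where "trap \<equiv> fork_trap k r"
abbreviation opt where "opt \<equiv> fork_opt k r"

lemma length_trap [simp]: "length trap = k"
  using two_r_le_k by (simp add: fork_trap_def)

lemma length_opt [simp]: "length opt = k"
  using two_r_le_k by (simp add: fork_opt_def)

lemma rev_trap [simp]: "rev trap = opt"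
  by (simp add: fork_trap_def fork_opt_def)

lemma rev_opt [simp]: "rev opt = trap"
  by (simp add: fork_trap_def fork_opt_def)

lemma trap_ne_opt [simp]: "trap \<noteq> opt"
proof -
  have "hd trap = False" "hd opt = True"
    using r_pos two_r_le_k by (auto simp: fork_trap_def fork_opt_def hd_append)
  then show ?thesis by auto
qed

lemma fork_trap_eq [simp]: "fork k r trap = k + 1"
  by (simp add: fork_def fork_trap_def)

lemma fork_opt_eq [simp]: "fork k r opt = k + 2"
  using trap_ne_opt by (simp add: fork_def fork_trap_def fork_opt_def)

lemma fork_eq_count: "x \<noteq> trap \<Longrightarrow> x \<noteq> opt \<Longrightarrow> fork k r x = length (filter id x)"
  by (simp add: fork_def fork_trap_def fork_opt_def)

lemma fork_ge_count: "length x = k \<Longrightarrow> length (filter id x) \<le> fork k r x"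
  by (auto simp: fork_def intro: order.trans[OF length_filter_le])

lemma fork_le_length: "x \<noteq> trap \<Longrightarrow> x \<noteq> opt \<Longrightarrow> fork k r x \<le> length x"
  by (simp add: fork_eq_count)

lemma fork_rev: "x \<noteq> trap \<Longrightarrow> x \<noteq> opt \<Longrightarrow> fork k r (rev x) = fork k r x"
  by (metis fork_eq_count rev_filter length_rev rev_opt rev_trap rev_rev_ident)

lemma hamming_trap_opt: "hamming trap opt = 2 * r"
proof -
  have "trap = replicate r False @ replicate (k - 2 * r) True @ replicate r True"
    using two_r_le_k by (simp add: fork_trap_def replicate_add[symmetric])
  moreover have "opt = replicate r True @ replicate (k - 2 * r) True @ replicate r False"
    using two_r_le_k by (simp add: fork_opt_def replicate_add[symmetric])
  ultimately show ?thesis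
    by (simp add: hamming_append hamming_replicate)
qed

lemma hamming_ones_opt: "hamming (replicate k True) opt = r"
proof -
  have "replicate k True = replicate (k - r) True @ replicate r True"
    using two_r_le_k by (simp add: replicate_add[symmetric])
  then show ?thesis
    by (simp add: fork_opt_def hamming_append hamming_replicate)
qed

lemma fork_improvement:
  assumes "length x = k" "x \<noteq> opt"
  shows "\<exists>y. length y = k \<and> fork k r x < fork k r y \<and> hamming x y = fork_level_gap k r (fork k r x)"
proof -
  consider "x = trap" | "x \<noteq> trap" "x = replicate k True" | "x \<noteq> trap" "False \<in> set x"
    using assms(1) by (metis (full_types) in_set_replicate length_replicate replicate_length_same)
  then show ?thesis
  proof cases
    case 1
    then show ?thesis
      using hamming_trap_opt by (intro exI[of _ opt]) (simp add: fork_level_gap_def)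
  next
    case 2
    then have "fork k r x = k"
      using assms fork_eq_count[of x] by simp
    then show ?thesis
      using 2 hamming_ones_opt by (intro exI[of _ opt]) (simp add: fork_level_gap_def)
  next
    case 3
    then obtain as bs where x: "x = as @ False # bs"
      by (meson split_list)
    define y where "y = as @ True # bs"
    have "fork k r x = length (filter id x)"
      using 3 assms by (simp add: fork_eq_count)
    moreover have "length (filter id x) < k"
      using assms(1) 3(2) length_filter_less[of False x id] by simp
    moreover have "Suc (length (filter id x)) \<le> fork k r y"
      using fork_ge_count[of y] assms(1) by (simp add: x y_def)
    moreover have "hamming x y = 1" "length y = k"
      using assms(1) by (simp_all add: x y_def hamming_append)
    ultimately show ?thesis
      by (intro exI[of _ y]) (simp add: fork_level_gap_def)
  qed
qed

lemma ea_step_rev: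
  assumes "x \<noteq> trap" "x \<noteq> opt"
  shows "ea_step (fork k r) n (rev x) = map_pmf rev (ea_step (fork k r) n x)"
proof -
  have accept_rev: "fork k r x \<le> fork k r (rev y) \<longleftrightarrow> fork k r x \<le> fork k r y"
    if "length y = length x" for y
  proof (cases "y = trap \<or> y = opt")
    case True
    have "fork k r x \<le> k"
      using that True fork_le_length[OF assms] by auto
    then show ?thesis
      using True by auto
  next
    case False
    then show ?thesis
      using fork_rev by simp
  qed
  have mutate_rev_x: "mutate (1 / real n) (rev x) = map_pmf rev (mutate (1 / real n) x)"
    by (rule mutate_rev) (simp_all add: one_over_real_nat_le_1)
  show ?thesis
    unfolding ea_step_def mutate_rev_x map_pmf_comp
    using fork_rev[OF assms] accept_rev
    by (intro map_pmf_cong) (auto dest: length_of_set_pmf_mutate)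
qed

lemma set_pmf_ea_step_trap: "set_pmf (ea_step (fork k r) n trap) \<subseteq> {trap, opt}"
proof
  fix y
  assume "y \<in> set_pmf (ea_step (fork k r) n trap)"
  then obtain z where z: "z \<in> set_pmf (mutate (1 / real n) trap)"
    "y = (if k + 1 \<le> fork k r z then z else trap)"
    by (auto simp: ea_step_def)
  have "fork k r z \<le> k" if "z \<noteq> trap" "z \<noteq> opt"
    using fork_le_length[OF that] length_of_set_pmf_mutate[OF z(1)] by simp
  then show "y \<in> {trap, opt}"
    using z(2) by (auto split: if_splits)
qed

end

section \<open>Upper bound\<close>

lemma exp_neg2_le_one_minus_inverse_power:
  assumes "2 \<le> n"
  shows "exp (-2) \<le> (1 - 1 / real n) ^ n"
proof -
  define x where "x = 1 / real n"
  have x: "0 \<le> x" "x \<le> 1 / 2" "0 < 1 - x"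
    using assms by (auto simp: x_def field_simps)
  have "-2 \<le> -1 - 2 / real n"
    using assms by (simp add: field_simps)
  also have "-1 - 2 / real n = real n * (- x - 2 * x\<^sup>2)"
    using assms by (simp add: x_def power2_eq_square field_simps)
  also have "\<dots> \<le> real n * ln (1 - x)"
    using ln_one_minus_pos_lower_bound[OF x(1,2)] by (intro mult_left_mono) auto
  finally have "exp (-2) \<le> exp (real n * ln (1 - x))"
    by simp
  also have "\<dots> = (1 - x) ^ n"
    using x(3) by (simp add: ln_realpow[symmetric])
  finally show ?thesis
    by (simp add: x_def)
qed

locale fork_ea = fork_landscape +
  fixes n :: nat
  assumes k_le_n: "k \<le> n"
begin

lemma two_le_n: "2 \<le> n"
  using r_pos two_r_le_k k_le_n by linarith

lemma expected_opt_time_fork_le: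
  "expected_opt_time (fork k r) n k opt
    \<le> ennreal ((real k * real n + real n ^ r + real n ^ (2 * r)) / (1 - 1 / real n) ^ n)"
proof -
  define Q where "Q = (1 - 1 / real n) ^ n"
  define w where "w v = real n ^ fork_level_gap k r v / Q" for v
  have Q: "0 < Q"
    using two_le_n by (simp add: Q_def)
  have w: "0 \<le> w v" for v
    using Q by (simp add: w_def)
  have below_top: "fork k r x < k + 2" if "length x = k" "x \<noteq> opt" for x
    using fork_le_length[of x] that by (cases "x = trap") auto
  have improve: "\<exists>y. fork k r x < fork k r y \<and> 1 \<le> w (fork k r x) * pmf (mutate (1 / real n) x) y"
    if x: "length x = k" "x \<noteq> opt" for x
  proof -
    obtain y where y: "length y = k" "fork k r x < fork k r y"
      "hamming x y = fork_level_gap k r (fork k r x)"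
      using fork_improvement[OF x] by blast
    have "1 = w (fork k r x) * ((1 / real n) ^ hamming x y * Q)"
      using y(3) Q two_le_n by (simp add: w_def power_one_over)
    also have "\<dots> \<le> w (fork k r x) * pmf (mutate (1 / real n) x) y"
      using pmf_mutate_ge[of y x n] y(1) x(1) k_le_n w
      by (intro mult_left_mono) (simp_all add: Q_def)
    finally show ?thesis
      using y(2) by blast
  qed
  have "expected_opt_time (fork k r) n k opt \<le> ennreal (\<Sum>v<k + 2. w v)"
    using w below_top improve by (rule expected_opt_time_fitness_levels)
  also have "(\<Sum>v<k + 2. w v) = (real k * real n + real n ^ r + real n ^ (2 * r)) / Q"
    by (simp add: w_def fork_level_gap_def add_divide_distrib)
  finally show ?thesis
    by (simp add: Q_def)
qed

lemma expected_opt_time_fork_le_power: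
  "expected_opt_time (fork k r) n k opt \<le> ennreal (3 * exp 2 * real n ^ (2 * r))"
proof -
  have "real k * real n \<le> real n * real n"
    using k_le_n by (intro mult_right_mono) auto
  also have "\<dots> \<le> real n ^ (2 * r)"
    using r_pos two_le_n power_increasing[of 2 "2 * r" "real n"] by (simp add: power2_eq_square)
  finally have "real k * real n \<le> real n ^ (2 * r)" .
  moreover have "real n ^ r \<le> real n ^ (2 * r)"
    using two_le_n by (intro power_increasing) auto
  ultimately have sum_le: "real k * real n + real n ^ r + real n ^ (2 * r) \<le> 3 * real n ^ (2 * r)"
    by linarith
  have "1 / (1 - 1 / real n) ^ n \<le> 1 / exp (-2)"
    using exp_neg2_le_one_minus_inverse_power[OF two_le_n] two_le_n by (intro divide_left_mono) auto
  then have inverse_le: "1 / (1 - 1 / real n) ^ n \<le> exp 2"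
    by (simp add: exp_minus inverse_eq_divide)
  have "(real k * real n + real n ^ r + real n ^ (2 * r)) / (1 - 1 / real n) ^ n
      = (real k * real n + real n ^ r + real n ^ (2 * r)) * (1 / (1 - 1 / real n) ^ n)"
    by simp
  also have "\<dots> \<le> 3 * real n ^ (2 * r) * exp 2"
    using sum_le inverse_le two_le_n by (intro mult_mono) auto
  finally have "ennreal ((real k * real n + real n ^ r + real n ^ (2 * r)) / (1 - 1 / real n) ^ n)
      \<le> ennreal (3 * exp 2 * real n ^ (2 * r))"
    by (intro ennreal_leI) (simp add: mult_ac)
  with expected_opt_time_fork_le show ?thesis
    by (rule order_trans)
qed

end

section \<open>Lower bound by reversal symmetry\<close>

lemma map_pmf_rev_ea_init: "map_pmf rev (ea_init k) = ea_init k"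
proof -
  have "rev ` {xs :: bool list. length xs = k} = {xs. length xs = k}"
    by (auto simp: image_iff) (metis length_rev rev_rev_ident)
  then show ?thesis
    unfolding ea_init_def
    by (subst map_pmf_of_set_inj) (auto simp: finite_lists_length Ex_list_of_length)
qed

context fork_ea
begin

abbreviation stopped where "stopped \<equiv> ea_stopped (fork k r) n k opt"

abbreviation stop_at_opt where "stop_at_opt y \<equiv> if y = opt then None else Some y"

text \<open>The stopped chain is not reversal symmetric at the trap, whose only move is to the
  optimum; it becomes symmetric once the trap is absorbed as well.\<close>
definition absorb_trap :: "bool list option \<Rightarrow> bool list option" where
  "absorb_trap s = (if s = Some trap then None else s)"

definition absorbed_step :: "bool list option \<Rightarrow> bool list option pmf" where
  "absorbed_step s = map_pmf absorb_trap (ea_stopped_step (fork k r) n opt s)"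

lemma absorb_stop_at_opt_rev:
  "map_option rev (absorb_trap (stop_at_opt y)) = absorb_trap (stop_at_opt (rev y))"
  by (auto simp: absorb_trap_def) (metis rev_opt rev_trap rev_rev_ident)+

lemma map_absorb_trap_ea_stopped_step:
  "map_pmf absorb_trap (ea_stopped_step (fork k r) n opt s) = absorbed_step (absorb_trap s)"
proof (cases "s = Some trap")
  case True
  have "map_pmf (\<lambda>y. absorb_trap (stop_at_opt y)) (ea_step (fork k r) n trap)
      = map_pmf (\<lambda>_. None) (ea_step (fork k r) n trap)"
    using set_pmf_ea_step_trap by (intro map_pmf_cong) (auto simp: absorb_trap_def)
  then show ?thesis
    using True by (simp add: absorbed_step_def ea_stopped_step_def absorb_trap_def map_pmf_comp)
next
  case False
  then show ?thesis
    by (simp add: absorbed_step_def absorb_trap_def)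
qed

lemma absorbed_Suc:
  "map_pmf absorb_trap (stopped (Suc t)) = map_pmf absorb_trap (stopped t) \<bind> absorbed_step"
  unfolding ea_stopped_Suc by (rule map_pmf_bind_pmf_lumped) (rule map_absorb_trap_ea_stopped_step)

lemma set_pmf_absorbed:
  "Some x \<in> set_pmf (map_pmf absorb_trap (stopped t)) \<Longrightarrow> x \<noteq> trap \<and> x \<noteq> opt"
  by (auto simp: absorb_trap_def split: if_splits dest: set_pmf_ea_stopped)

lemma absorbed_step_rev:
  assumes "x \<noteq> trap" "x \<noteq> opt"
  shows "map_pmf (map_option rev) (absorbed_step (Some x)) = absorbed_step (Some (rev x))"
  using assms
  by (simp add: absorbed_step_def ea_stopped_step_def map_pmf_comp ea_step_rev
      absorb_stop_at_opt_rev)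

lemma absorbed_rev_invariant:
  "map_pmf (map_option rev) (map_pmf absorb_trap (stopped t)) = map_pmf absorb_trap (stopped t)"
proof (rule map_pmf_chain_invariant)
  have "map_pmf (map_option rev) (map_pmf absorb_trap (stopped 0))
      = map_pmf (\<lambda>y. map_option rev (absorb_trap (stop_at_opt y))) (ea_init k)"
    unfolding ea_stopped_def funpow_0 map_pmf_comp ..
  also have "\<dots> = map_pmf (\<lambda>y. absorb_trap (stop_at_opt y)) (map_pmf rev (ea_init k))"
    unfolding absorb_stop_at_opt_rev map_pmf_comp ..
  also have "\<dots> = map_pmf absorb_trap (stopped 0)"
    unfolding map_pmf_rev_ea_init ea_stopped_def funpow_0 map_pmf_comp ..
  finally show "map_pmf (map_option rev) (map_pmf absorb_trap (stopped 0))
      = map_pmf absorb_trap (stopped 0)" .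
next
  fix t s
  assume "s \<in> set_pmf (map_pmf absorb_trap (stopped t))"
  then show "map_pmf (map_option rev) (absorbed_step s) = absorbed_step (map_option rev s)"
    using set_pmf_absorbed absorbed_step_rev
    by (cases s) (auto simp: absorbed_step_def ea_stopped_step_def absorb_trap_def)
qed (rule absorbed_Suc)

definition enter_prob :: "bool list \<Rightarrow> bool list option \<Rightarrow> ennreal" where
  "enter_prob y s = (case s of None \<Rightarrow> 0 | Some x \<Rightarrow> ennreal (pmf (ea_step (fork k r) n x) y))"

lemma enter_prob_opt_rev:
  assumes "x \<noteq> trap" "x \<noteq> opt"
  shows "enter_prob opt (Some (rev x)) = enter_prob trap (Some x)"
proof -
  have "pmf (ea_step (fork k r) n (rev x)) opt
      = pmf (map_pmf rev (ea_step (fork k r) n x)) (rev trap)"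
    using assms by (simp add: ea_step_rev)
  also have "\<dots> = pmf (ea_step (fork k r) n x) trap"
    by (rule pmf_map_inj') (simp add: inj_def)
  finally show ?thesis
    by (simp add: enter_prob_def)
qed

lemma nn_integral_enter_trap_eq_enter_opt:
  "(\<integral>\<^sup>+ s. enter_prob trap (absorb_trap s) \<partial>stopped t)
    = (\<integral>\<^sup>+ s. enter_prob opt (absorb_trap s) \<partial>stopped t)"
proof -
  let ?Y = "map_pmf absorb_trap (stopped t)"
  have "(\<integral>\<^sup>+ s. enter_prob opt s \<partial>?Y) = (\<integral>\<^sup>+ s. enter_prob opt s \<partial>map_pmf (map_option rev) ?Y)"
    by (simp only: absorbed_rev_invariant)
  also have "\<dots> = (\<integral>\<^sup>+ s. enter_prob opt (map_option rev s) \<partial>?Y)"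
    by simp
  also have "\<dots> = (\<integral>\<^sup>+ s. enter_prob trap s \<partial>?Y)"
  proof (intro nn_integral_cong_AE, unfold AE_measure_pmf_iff, intro ballI)
    fix s
    assume s: "s \<in> set_pmf ?Y"
    show "enter_prob opt (map_option rev s) = enter_prob trap s"
    proof (cases s)
      case None
      then show ?thesis by (simp add: enter_prob_def)
    next
      case (Some x)
      then show ?thesis
        using s set_pmf_absorbed[of x t] enter_prob_opt_rev by simp
    qed
  qed
  finally show ?thesis
    by simp
qed

definition p_escape :: real where
  "p_escape = pmf (ea_step (fork k r) n trap) opt"

lemma p_escape_eq: "p_escape = (1 / real n) ^ (2 * r) * (1 - 1 / real n) ^ (k - 2 * r)"
proof -
  have "(\<lambda>z. if fork k r trap \<le> fork k r z then z else trap) -` {opt} = {opt}"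
    by (auto split: if_splits)
  then have "p_escape = pmf (mutate (1 / real n) trap) opt"
    by (simp add: p_escape_def ea_step_def pmf_map measure_pmf_single)
  then show ?thesis
    by (simp add: pmf_mutate one_over_real_nat_le_1 hamming_trap_opt)
qed

lemma p_escape_pos: "0 < p_escape"
  using two_le_n by (simp add: p_escape_eq)

lemma p_escape_le: "p_escape \<le> (1 / real n) ^ (2 * r)"
proof -
  have "(1 - 1 / real n) ^ (k - 2 * r) \<le> 1"
    using two_le_n by (intro power_le_one) auto
  then show ?thesis
    unfolding p_escape_eq using two_le_n by (intro mult_left_le) auto
qed

text \<open>1 / p_escape times the probability of visiting the trap before the optimum, as guessed from
  the symmetry: 1 at the trap and 1/2 at every other non-optimal point.\<close>
definition trap_potential :: "bool list option \<Rightarrow> ennreal" where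
  "trap_potential s = (case s of None \<Rightarrow> 0
     | Some x \<Rightarrow> if x = trap then ennreal (1 / p_escape) else ennreal (1 / (2 * p_escape)))"

lemma nn_integral_trap_potential_from_trap:
  "(\<integral>\<^sup>+ z. trap_potential (stop_at_opt z) \<partial>ea_step (fork k r) n trap) + 1 = ennreal (1 / p_escape)"
proof -
  let ?E = "ea_step (fork k r) n trap"
  have pointwise: "trap_potential (stop_at_opt z) + ennreal (1 / p_escape) * indicator {opt} z
      = ennreal (1 / p_escape)" if "z \<in> set_pmf ?E" for z
    using set_pmf_ea_step_trap that by (auto simp: trap_potential_def)
  have "(\<integral>\<^sup>+ z. trap_potential (stop_at_opt z) \<partial>?E) + 1
      = (\<integral>\<^sup>+ z. trap_potential (stop_at_opt z) \<partial>?E) + ennreal (1 / p_escape) * ennreal p_escape"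
    using p_escape_pos by (simp add: ennreal_mult[symmetric] del: ennreal_mult)
  also have "\<dots> = (\<integral>\<^sup>+ z. trap_potential (stop_at_opt z)
      + ennreal (1 / p_escape) * indicator {opt} z \<partial>?E)"
    by (simp add: nn_integral_add nn_integral_cmult_indicator emeasure_pmf_single p_escape_def)
  also have "\<dots> = (\<integral>\<^sup>+ z. ennreal (1 / p_escape) \<partial>?E)"
    by (intro nn_integral_cong_AE) (simp add: AE_measure_pmf_iff pointwise)
  also have "\<dots> = ennreal (1 / p_escape)"
    by (simp add: measure_pmf.emeasure_space_1)
  finally show ?thesis .
qed

lemma nn_integral_trap_potential_from_other:
  fixes x :: "bool list"
  defines "c \<equiv> ennreal (1 / (2 * p_escape))" and "E \<equiv> ea_step (fork k r) n x"
  shows "(\<integral>\<^sup>+ z. trap_potential (stop_at_opt z) \<partial>E) + c * pmf E opt = c + c * pmf E trap"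
proof -
  have "c + c = ennreal (1 / p_escape)"
    using p_escape_pos by (simp add: c_def ennreal_plus[symmetric] del: ennreal_plus)
  then have pointwise:
    "trap_potential (stop_at_opt z) + c * indicator {opt} z = c + c * indicator {trap} z" for z
    by (auto simp: trap_potential_def c_def)
  have "(\<integral>\<^sup>+ z. trap_potential (stop_at_opt z) \<partial>E) + c * pmf E opt
      = (\<integral>\<^sup>+ z. trap_potential (stop_at_opt z) + c * indicator {opt} z \<partial>E)"
    by (simp add: nn_integral_add nn_integral_cmult_indicator emeasure_pmf_single)
  also have "\<dots> = (\<integral>\<^sup>+ z. c + c * indicator {trap} z \<partial>E)"
    by (simp only: pointwise)
  also have "\<dots> = c + c * pmf E trap"
    by (simp add: nn_integral_add nn_integral_cmult_indicator emeasure_pmf_single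
        measure_pmf.emeasure_space_1)
  finally show ?thesis .
qed

lemma trap_potential_step:
  assumes "s \<in> set_pmf (stopped t)"
  shows "(\<integral>\<^sup>+ s'. trap_potential s' \<partial>ea_stopped_step (fork k r) n opt s) + indicator {Some trap} s
           + ennreal (1 / (2 * p_escape)) * enter_prob opt (absorb_trap s)
         = trap_potential s + ennreal (1 / (2 * p_escape)) * enter_prob trap (absorb_trap s)"
proof -
  consider "s = None" | "s = Some trap" | x where "s = Some x" "x \<noteq> trap" "x \<noteq> opt"
    using assms set_pmf_ea_stopped by (cases s) auto
  then show ?thesis
  proof cases
    case 1
    then show ?thesis
      by (simp add: ea_stopped_step_def trap_potential_def enter_prob_def absorb_trap_def)
  next
    case 2
    then show ?thesis
      using nn_integral_trap_potential_from_trap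
      by (simp add: ea_stopped_step_def trap_potential_def enter_prob_def absorb_trap_def)
  next
    case 3
    then show ?thesis
      using nn_integral_trap_potential_from_other[of x]
      by (simp add: ea_stopped_step_def trap_potential_def enter_prob_def absorb_trap_def)
  qed
qed

lemma trap_potential_Suc:
  "(\<integral>\<^sup>+ s. trap_potential s \<partial>stopped (Suc t)) + emeasure (stopped t) {Some trap}
    = (\<integral>\<^sup>+ s. trap_potential s \<partial>stopped t)"
proof -
  let ?S = "ea_stopped_step (fork k r) n opt"
  define c where "c = ennreal (1 / (2 * p_escape))"
  define X where "X = (\<integral>\<^sup>+ s. enter_prob trap (absorb_trap s) \<partial>stopped t)"
  have "X \<le> (\<integral>\<^sup>+ s. 1 \<partial>stopped t)"
    unfolding X_def
    by (intro nn_integral_mono) (auto simp: enter_prob_def pmf_le_1 split: option.split)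
  then have "X < \<top>"
    by (simp add: measure_pmf.emeasure_space_1 order.strict_trans1)
  then have finite: "c * X \<noteq> \<top>"
    by (simp add: c_def ennreal_mult_eq_top_iff)
  have "(\<integral>\<^sup>+ s. trap_potential s \<partial>stopped (Suc t)) + emeasure (stopped t) {Some trap} + c * X
      = (\<integral>\<^sup>+ s. (\<integral>\<^sup>+ s'. trap_potential s' \<partial>?S s) + indicator {Some trap} s
                 + c * enter_prob opt (absorb_trap s) \<partial>stopped t)"
    by (simp add: ea_stopped_Suc nn_integral_bind_pmf nn_integral_add nn_integral_cmult X_def
        nn_integral_enter_trap_eq_enter_opt)
  also have "\<dots> = (\<integral>\<^sup>+ s. trap_potential s + c * enter_prob trap (absorb_trap s) \<partial>stopped t)"
    unfolding c_def
    by (intro nn_integral_cong_AE) (simp add: AE_measure_pmf_iff trap_potential_step)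
  also have "\<dots> = (\<integral>\<^sup>+ s. trap_potential s \<partial>stopped t) + c * X"
    by (simp add: nn_integral_add nn_integral_cmult X_def)
  finally show ?thesis
    using finite ennreal_add_left_cancel[of "c * X"] by (simp add: add.commute)
qed

lemma partial_sums_plus_tail_ge:
  "1 / (2 * p_escape) * measure (stopped 0) (range Some)
    \<le> (\<Sum>t<m. measure (stopped t) (range Some)) + 1 / p_escape * measure (stopped m) (range Some)"
proof -
  define H where "H = 1 / p_escape"
  have H: "0 < H"
    using p_escape_pos by (simp add: H_def)
  have half: "1 / (2 * p_escape) = H / 2"
    by (simp add: H_def)
  have potential_ge: "ennreal (H / 2) * indicator (range Some) s \<le> trap_potential s" for s
    using H by (cases s) (auto simp: trap_potential_def half H_def[symmetric] ennreal_leI)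
  have potential_le: "trap_potential s \<le> ennreal H * indicator (range Some) s" for s
    using H by (cases s) (auto simp: trap_potential_def half H_def[symmetric] ennreal_leI)
  have "ennreal (H / 2 * measure (stopped 0) (range Some))
      = (\<integral>\<^sup>+ s. ennreal (H / 2) * indicator (range Some) s \<partial>stopped 0)"
    using H by (simp add: nn_integral_cmult_indicator measure_pmf.emeasure_eq_measure
        ennreal_mult[symmetric] del: ennreal_mult)
  also have "\<dots> \<le> (\<integral>\<^sup>+ s. trap_potential s \<partial>stopped 0)"
    by (intro nn_integral_mono potential_ge)
  also have "\<dots> \<le> (\<Sum>t<m. emeasure (stopped t) {Some trap}) + (\<integral>\<^sup>+ s. trap_potential s \<partial>stopped m)"
    by (rule telescope_ge) (simp add: trap_potential_Suc)
  also have "\<dots> \<le> (\<Sum>t<m. emeasure (stopped t) (range Some))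
      + (\<integral>\<^sup>+ s. ennreal H * indicator (range Some) s \<partial>stopped m)"
    by (intro add_mono sum_mono emeasure_mono nn_integral_mono potential_le) auto
  also have "\<dots> = ennreal ((\<Sum>t<m. measure (stopped t) (range Some))
      + H * measure (stopped m) (range Some))"
    using H by (simp add: nn_integral_cmult_indicator measure_pmf.emeasure_eq_measure sum_ennreal
        ennreal_mult ennreal_plus sum_nonneg)
  finally have "H / 2 * measure (stopped 0) (range Some)
      \<le> (\<Sum>t<m. measure (stopped t) (range Some)) + H * measure (stopped m) (range Some)"
    using H by (subst (asm) ennreal_le_iff) (auto intro!: add_nonneg_nonneg sum_nonneg)
  then show ?thesis
    by (simp add: half H_def)
qed

lemma expected_opt_time_fork_ge:
  "ennreal (1 / (4 * p_escape)) \<le> expected_opt_time (fork k r) n k opt"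
proof -
  have "(2::real) ^ 1 \<le> 2 ^ k"
    using two_r_le_k r_pos by (intro power_increasing) auto
  then have "1 / 2 ^ k \<le> (1::real) / 2"
    by (intro divide_left_mono) auto
  then have "1 / 2 \<le> measure (stopped 0) (range Some)"
    using measure_ea_stopped_0[of opt k "fork k r" n] by simp
  then have "1 / (4 * p_escape) \<le> 1 / (2 * p_escape) * measure (stopped 0) (range Some)"
    using p_escape_pos by (simp add: field_simps)
  then have "1 / (4 * p_escape)
      \<le> (\<Sum>t<m. measure (stopped t) (range Some)) + 1 / p_escape * measure (stopped m) (range Some)"
    for m using partial_sums_plus_tail_ge[of m] by linarith
  then show ?thesis
    unfolding expected_opt_time_def by (rule ennreal_le_suminf_if_tail_bound[OF measure_nonneg])
qed

lemma expected_opt_time_fork_ge_power: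
  "ennreal (1 / 4 * real n ^ (2 * r)) \<le> expected_opt_time (fork k r) n k opt"
proof -
  have "real n ^ (2 * r) \<le> 1 / p_escape"
    using p_escape_le p_escape_pos two_le_n by (simp add: power_one_over field_simps)
  then have "1 / 4 * real n ^ (2 * r) \<le> 1 / (4 * p_escape)"
    by simp
  then show ?thesis
    using expected_opt_time_fork_ge by (rule ennreal_leI[THEN order_trans])
qed

end

theorem theorem2:
  fixes r :: nat
  assumes "r \<ge> 2"
  shows "\<exists>c1 c2 :: real. c1 > 0 \<and> c2 > 0 \<and> (\<exists>N. \<forall>n \<ge> N. \<forall>k.
           2 * r \<le> k \<and> k \<le> n \<longrightarrow>
             ennreal (c1 * real n ^ (2 * r)) \<le> expected_opt_time (fork k r) n k (fork_opt k r) \<and>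
             expected_opt_time (fork k r) n k (fork_opt k r) \<le> ennreal (c2 * real n ^ (2 * r)))"
proof -
  have bounds:
    "ennreal (1 / 4 * real n ^ (2 * r)) \<le> expected_opt_time (fork k r) n k (fork_opt k r) \<and>
     expected_opt_time (fork k r) n k (fork_opt k r) \<le> ennreal (3 * exp 2 * real n ^ (2 * r))"
    if "2 * r \<le> k" "k \<le> n" for n k
  proof -
    interpret fork_ea k r n
      using assms that by unfold_locales auto
    show ?thesis
      using expected_opt_time_fork_ge_power expected_opt_time_fork_le_power by blast
  qed
  show ?thesis
    by (rule exI[of _ "1 / 4"], rule exI[of _ "3 * exp 2"], intro conjI exI[of _ 0])
      (use bounds in auto)
qed

end
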